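(* Let $\rho\ge1$, $n\ge1$, $\alpha,\beta>-1$. (i) If $\alpha>\beta$ and $\alpha+\beta\ge-1$, then $\max_{z\in\mathcal{E}_\rho}|P_n^{(\alpha,\beta)}(z)|=P_n^{(\alpha,\beta)}\big(\tfrac12(\rho+\rho^{-1})\big)$, and the maximum is attained only at $z=\tfrac12(\rho+\rho^{-1})$. (ii) If $\alpha<\beta$ and $\alpha+\beta\ge-1$, then $\max_{z\in\mathcal{E}_\rho}|P_n^{(\alpha,\beta)}(z)|=\big|P_n^{(\alpha,\beta)}\big(-\tfrac12(\rho+\rho^{-1})\big)\big|$, and the maximum is attained only at $z=-\tfrac12(\rho+\rho^{-1})$. (iii) If $\alpha=\beta\ge-\tfrac12$, then $\max_{z\in\mathcal{E}_\rho}|P_n^{(\alpha,\beta)}(z)|=\big|P_n^{(\alpha,\beta)}\big(\pm\tfrac12(\rho+\rho^{-1})\big)\big|$ (attained at both endpoints of the major axis); if moreover $\alpha=\beta>-\tfrac12$, the maximum is attained only at these two points.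
   Context: $P_n^{(\alpha,\beta)}$ is the Jacobi polynomial $2^{-n}\sum_{k=0}^n\binom{n+\alpha}{n-k}\binom{n+\beta}{k}(x-1)^k(x+1)^{n-k}$. The Bernstein ellipse is $\mathcal{E}_\rho=\{\tfrac12(u+u^{-1}): u=\rho e^{i\theta},\ 0\le\theta<2\pi\}$ for $\rho\ge1$ (foci $\pm1$, semi-axes $\tfrac12(\rho\pm\rho^{-1})$). *)

theory Defs
  imports "HOL-Analysis.Analysis"
begin

definition jacobiP :: "nat \<Rightarrow> real \<Rightarrow> real \<Rightarrow> complex \<Rightarrow> complex" where
  "jacobiP n a b z = (1 / 2 ^ n) * (\<Sum>k\<le>n.
      complex_of_real (((real n + a) gchoose (n - k)) * ((real n + b) gchoose k))
      * (z - 1) ^ k * (z + 1) ^ (n - k))"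

definition bernstein_ellipse :: "real \<Rightarrow> complex set" where
  "bernstein_ellipse \<rho> =
     {(u + inverse u) / 2 | u. \<exists>\<theta>. 0 \<le> \<theta> \<and> \<theta> < 2 * pi \<and> u = complex_of_real \<rho> * cis \<theta>}"

end

theory Submission
  imports Defs "HOL-Computational_Algebra.Polynomial"
begin

text \<open>
  Under \<open>z = (u + u\<^sup>-\<^sup>1)/2\<close> the circle \<open>|u| = \<rho>\<close> is mapped onto the Bernstein ellipse, and
  \<open>(4u)^n P_n^(\<alpha>,\<beta>)(z) = Q(u)\<close> where
  \<open>Q(u) = \<Sum>\<^sub>k binom(n+\<alpha>, n-k) binom(n+\<beta>, k) (u - 1)^(2k) (u + 1)^(2(n-k))\<close>
  is a palindromic polynomial of degree \<open>2n\<close>. Transported to \<open>u\<close>, the Jacobi differential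
  equation becomes a three-term recurrence for the coefficients \<open>q\<^sub>j\<close> of \<open>Q\<close>. When
  \<open>\<alpha> \<ge> \<beta>\<close> and \<open>\<alpha> + \<beta> \<ge> -1\<close> it carries \<open>q\<^sub>0 > 0\<close> over to \<open>q\<^sub>j \<ge> 0\<close> for \<open>j \<le> n\<close>,
  and palindromy gives the other half. Hence \<open>|Q(u)| \<le> Q(\<rho>)\<close> on \<open>|u| = \<rho>\<close>, and equality
  forces every term \<open>q\<^sub>j u^j\<close> to be a nonnegative real. As \<open>q\<^sub>1 > 0\<close> for \<open>\<alpha> > \<beta>\<close> and
  \<open>q\<^sub>2 > 0\<close> for \<open>\<alpha> = \<beta> > -1/2\<close>, this means \<open>u = \<rho>\<close>, respectively \<open>u\<^sup>2 = \<rho>\<^sup>2\<close>.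
  The case \<open>\<alpha> < \<beta>\<close> follows from \<open>P_n^(\<alpha>,\<beta>)(-z) = (-1)^n P_n^(\<beta>,\<alpha>)(z)\<close>.
\<close>

section \<open>The polynomial \<open>Q\<close> and its differential equation\<close>

definition pX :: "real poly" where "pX = [:0, 1:]"
definition pXm1 :: "real poly" where "pXm1 = [:-1, 1:]"
definition pXp1 :: "real poly" where "pXp1 = [:1, 1:]"

lemma pderiv_pX [simp]: "pderiv pX = 1"
  and pderiv_pXm1 [simp]: "pderiv pXm1 = 1"
  and pderiv_pXp1 [simp]: "pderiv pXp1 = 1"
  by (simp_all add: pX_def pXm1_def pXp1_def pderiv_pCons one_pCons)

lemma pXm1_times_pXp1: "pXm1 * pXp1 = pX ^ 2 - 1"
  by (simp add: pXm1_def pXp1_def pX_def power2_eq_square one_pCons)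

lemma pXm1_plus_pXp1: "pXm1 + pXp1 = smult 2 pX"
  by (simp add: pXm1_def pXp1_def pX_def)

lemma pderiv_power_linear:
  assumes "pderiv p = 1"
  shows "p * pderiv (p ^ k) = smult (real k) (p ^ k)"
proof (cases k)
  case (Suc j)
  show ?thesis
    unfolding Suc pderiv_power_Suc using assms by (simp add: mult_ac)
qed simp

definition jacobi_coeff :: "nat \<Rightarrow> real \<Rightarrow> real \<Rightarrow> nat \<Rightarrow> real" where
  "jacobi_coeff n a b k = ((real n + a) gchoose (n - k)) * ((real n + b) gchoose k)"

definition joukowski_basis :: "nat \<Rightarrow> nat \<Rightarrow> real poly" where
  "joukowski_basis n k = pXm1 ^ (2*k) * pXp1 ^ (2*(n-k))"

definition jacobi_joukowski :: "nat \<Rightarrow> real \<Rightarrow> real \<Rightarrow> real poly" where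
  "jacobi_joukowski n a b = (\<Sum>k\<le>n. smult (jacobi_coeff n a b k) (joukowski_basis n k))"

definition euler_op :: "nat \<Rightarrow> real poly \<Rightarrow> real poly" where
  "euler_op n p = pX * pderiv p - smult (real n) p"

text \<open>Since \<open>euler_op n p = u\<^sup>n (u \<partial>\<^sub>u) (u\<^sup>-\<^sup>n p)\<close>, this is the Jacobi operator
  \<open>(1-z\<^sup>2)\<partial>\<^sub>z\<^sup>2 + (b-a-(a+b+2)z)\<partial>\<^sub>z + n(n+a+b+1)\<close> after the substitution \<open>z = (u+u\<^sup>-\<^sup>1)/2\<close>,
  \<open>y = u\<^sup>-\<^sup>n q(u)\<close>, multiplied by \<open>u\<^sup>n (1 - u\<^sup>2)\<close>.\<close>
definition jacobi_op :: "nat \<Rightarrow> real \<Rightarrow> real \<Rightarrow> real poly \<Rightarrow> real poly" where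
  "jacobi_op n a b p = pXm1 * pXp1 * euler_op n (euler_op n p)
     + (smult (2*(a-b)) pX + smult (a+b+1) (pX^2+1)) * euler_op n p
     - smult (real n * (real n + a + b + 1)) (pXm1 * pXp1 * p)"

lemma euler_op_add: "euler_op n (p + q) = euler_op n p + euler_op n q"
  by (simp add: euler_op_def pderiv_add algebra_simps smult_add_right smult_diff_right
      smult_add_left mult_smult_right mult_smult_left)

lemma euler_op_smult: "euler_op n (smult c p) = smult c (euler_op n p)"
  by (simp add: euler_op_def pderiv_smult algebra_simps smult_add_right smult_diff_right
      smult_add_left mult_smult_right mult_smult_left)

lemma jacobi_op_add: "jacobi_op n a b (p + q) = jacobi_op n a b p + jacobi_op n a b q"
  by (simp add: jacobi_op_def euler_op_add algebra_simps smult_add_right smult_diff_right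
      smult_add_left mult_smult_right mult_smult_left)

lemma jacobi_op_smult: "jacobi_op n a b (smult c p) = smult c (jacobi_op n a b p)"
  by (simp add: jacobi_op_def euler_op_smult algebra_simps smult_add_right smult_diff_right
      smult_add_left mult_smult_right mult_smult_left)

lemma jacobi_op_sum:
  "jacobi_op n a b (\<Sum>k\<in>S. smult (f k) (g k)) = (\<Sum>k\<in>S. smult (f k) (jacobi_op n a b (g k)))"
  by (induction S rule: infinite_finite_induct)
    (simp_all add: jacobi_op_add jacobi_op_smult jacobi_op_smult[where c=0, simplified])

lemma pderiv_joukowski_basis:
  "pXm1 * pXp1 * pderiv (pXm1 ^ (2*k) * pXp1 ^ (2*m))
     = (smult (2*real k) pXp1 + smult (2*real m) pXm1) * (pXm1 ^ (2*k) * pXp1 ^ (2*m))"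
proof -
  have "pXm1 * pXp1 * pderiv (pXm1 ^ (2*k) * pXp1 ^ (2*m)) =
      pXp1 * (pXm1 * pderiv (pXm1 ^ (2*k))) * pXp1 ^ (2*m)
      + pXm1 * (pXp1 * pderiv (pXp1 ^ (2*m))) * pXm1 ^ (2*k)"
    by (simp add: pderiv_mult distrib_left mult_ac)
  then show ?thesis
    by (simp add: pderiv_power_linear algebra_simps)
qed

lemma euler_op_euler_op:
  assumes dt: "pXm1*pXp1 * pderiv t = W * t" and dR: "pderiv R = W"
    and e: "pXm1*pXp1 * euler_op n t = R * t"
  shows "(pXm1*pXp1)^2 * euler_op n (euler_op n t)
       = (pX*W*(pXm1*pXp1 + R) - pX*(pXm1+pXp1)*R - smult (real n) (pXm1*pXp1*R)) * t"
proof -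
  define e where "e = euler_op n t"
  have "pderiv (pXm1*pXp1*e) = pderiv (R*t)" using e unfolding e_def by simp
  then have de: "pXm1*pXp1*pderiv e = R * pderiv t + t*W - e*(pXm1+pXp1)"
    by (simp add: pderiv_mult dR algebra_simps)
  have "(pXm1*pXp1)^2 * euler_op n e
      = pXm1*pXp1*pX*(pXm1*pXp1*pderiv e) - smult (real n) (pXm1*pXp1*(pXm1*pXp1*e))"
    by (simp add: euler_op_def power2_eq_square algebra_simps)
  also have "\<dots> = pX*R*(pXm1*pXp1*pderiv t) + pXm1*pXp1*pX*t*W
      - pX*(pXm1+pXp1)*(pXm1*pXp1*e) - smult (real n) (pXm1*pXp1*(R*t))"
    unfolding de e[folded e_def, symmetric] by (simp add: algebra_simps)
  also have "\<dots> = (pX*W*(pXm1*pXp1 + R) - pX*(pXm1+pXp1)*R - smult (real n) (pXm1*pXp1*R)) * t"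
    unfolding dt e[folded e_def] by (simp add: algebra_simps)
  finally show ?thesis unfolding e_def .
qed

lemma jacobi_op_joukowski_basis:
  assumes "n = k + m"
  shows "(pXm1*pXp1)^2 * jacobi_op n a b (pXm1 ^ (2*k) * pXp1 ^ (2*m)) =
    pXm1*pXp1 * (smult (real k * (real k + a)) (pXp1^4)
       - smult (real m * (real m + b) + real k * (real k + a)) (pXm1^2*pXp1^2)
       + smult (real m * (real m + b)) (pXm1^4)) * (pXm1 ^ (2*k) * pXp1 ^ (2*m))"
    (is "_ = pXm1*pXp1 * ?R * _")
proof -
  define t where "t = pXm1 ^ (2*k) * pXp1 ^ (2*m)"
  define W where "W = smult (2*real k) pXp1 + smult (2*real m) pXm1"
  define R where "R = pX * W - smult (real n) (pXm1*pXp1)"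
  have dt: "pXm1*pXp1*pderiv t = W * t"
    unfolding t_def W_def by (rule pderiv_joukowski_basis)
  have "pderiv R = pX * smult (2*real k + 2*real m) 1 + W - smult (real n) (pXm1 + pXp1)"
    by (simp add: R_def W_def pderiv_diff pderiv_mult pderiv_add pderiv_smult algebra_simps
        smult_add_right smult_add_left)
  then have dR: "pderiv R = W"
    unfolding pXm1_plus_pXp1 using assms by (simp add: algebra_simps)
  have "pXm1*pXp1*euler_op n t = pX * (pXm1*pXp1*pderiv t) - smult (real n) (pXm1*pXp1*t)"
    by (simp add: euler_op_def algebra_simps)
  then have e: "pXm1*pXp1*euler_op n t = R*t"
    unfolding dt R_def by (simp add: algebra_simps)
  have R: "pX*W*(pXm1*pXp1 + R) - pX*(pXm1+pXp1)*R - smult (real n) (pXm1*pXp1*R)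
       + (smult (2*(a-b)) pX + smult (a+b+1) (pX^2+1)) * R
       - smult (real n * (real n + a + b + 1)) ((pXm1*pXp1)^2) = ?R"
    by (rule poly_ext) (simp add: W_def R_def assms pXm1_def pXp1_def pX_def
        algebra_simps power2_eq_square power4_eq_xxxx)
  have "(pXm1*pXp1)^2 * jacobi_op n a b t
      = pXm1*pXp1*((pXm1*pXp1)^2 * euler_op n (euler_op n t))
        + (smult (2*(a-b)) pX + smult (a+b+1) (pX^2+1)) * (pXm1*pXp1*(pXm1*pXp1*euler_op n t))
        - smult (real n * (real n + a + b + 1)) ((pXm1*pXp1)^2 * (pXm1*pXp1) * t)"
    unfolding jacobi_op_def by (simp add: power2_eq_square algebra_simps)
  also have "\<dots> = pXm1*pXp1 * ?R * t"
    unfolding euler_op_euler_op[OF dt dR e] e R[symmetric] by (simp add: algebra_simps)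
  finally show ?thesis unfolding t_def .
qed

lemma jacobi_coeff_Suc:
  assumes "k < n"
  shows "jacobi_coeff n a b (Suc k) * (real (Suc k) * (real (Suc k) + a))
       = jacobi_coeff n a b k * (real (n-k) * (real (n-k) + b))"
proof -
  have gchoose_Suc: "(x gchoose Suc i) * of_nat (Suc i) = (x gchoose i) * (x - of_nat i)"
    for x :: real and i
    using gbinomial_mult_1[of x i] by (simp add: algebra_simps)
  obtain j where j: "n - k = Suc j" "n - Suc k = j" using assms by (metis Suc_diff_Suc diff_Suc_Suc)
  then have "real n = real j + real k + 1" by linarith
  then have ga: "((real n + a) gchoose j) * (real (Suc k) + a)
      = ((real n + a) gchoose (n-k)) * real (n-k)"
    using gchoose_Suc[of "real n + a" j] j by (simp add: add_ac)
  have gb: "((real n + b) gchoose Suc k) * real (Suc k)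
      = ((real n + b) gchoose k) * (real (n-k) + b)"
    using gchoose_Suc[of "real n + b" k] assms by (simp add: of_nat_diff)
  have "jacobi_coeff n a b (Suc k) * (real (Suc k) * (real (Suc k) + a))
      = (((real n + a) gchoose j) * (real (Suc k) + a)) * (((real n + b) gchoose Suc k) * real (Suc k))"
    unfolding jacobi_coeff_def j(2) by (simp only: mult_ac)
  also have "\<dots> = jacobi_coeff n a b k * (real (n-k) * (real (n-k) + b))"
    unfolding ga gb jacobi_coeff_def by (simp only: mult_ac)
  finally show ?thesis .
qed

lemma sum_three_term_telescope:
  fixes f g :: "nat \<Rightarrow> real" and x y z :: "nat \<Rightarrow> real poly"
  assumes "f 0 = 0" "g n = 0" and "\<And>k. k < n \<Longrightarrow> f (Suc k) = g k"
    and "\<And>k. k < n \<Longrightarrow> x (Suc k) = y k" "\<And>k. k < n \<Longrightarrow> z k = y (Suc k)"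
  shows "(\<Sum>k\<le>n. smult (f k) (x k) - smult (f k + g k) (y k) + smult (g k) (z k)) = 0"
proof -
  have drop_last: "(\<Sum>k\<le>n. smult (g k) (w k)) = (\<Sum>k<n. smult (g k) (w k))" for w
    unfolding lessThan_Suc_atMost[symmetric] sum.lessThan_Suc using assms(2) by simp
  have "(\<Sum>k\<le>n. smult (f k) (x k)) = (\<Sum>k<n. smult (f (Suc k)) (x (Suc k)))"
    unfolding sum.atMost_shift using assms(1) by simp
  also have "\<dots> = (\<Sum>k\<le>n. smult (g k) (y k))"
    unfolding drop_last using assms(3,4) by (intro sum.cong) simp_all
  finally have x: "(\<Sum>k\<le>n. smult (f k) (x k)) = (\<Sum>k\<le>n. smult (g k) (y k))" .
  have "(\<Sum>k\<le>n. smult (g k) (z k)) = (\<Sum>k<n. smult (f (Suc k)) (y (Suc k)))"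
    unfolding drop_last using assms(3,5) by (intro sum.cong) simp_all
  also have "\<dots> = (\<Sum>k\<le>n. smult (f k) (y k))"
    unfolding sum.atMost_shift using assms(1) by simp
  finally have z: "(\<Sum>k\<le>n. smult (g k) (z k)) = (\<Sum>k\<le>n. smult (f k) (y k))" .
  show ?thesis
    by (simp add: sum.distrib sum_subtractf x z smult_add_left)
qed

lemma jacobi_op_jacobi_joukowski: "jacobi_op n a b (jacobi_joukowski n a b) = 0"
proof -
  define A where "A = jacobi_coeff n a b"
  define B where "B k = real k * (real k + a)" for k
  define C where "C k = real (n-k) * (real (n-k) + b)" for k
  define T where "T = joukowski_basis n"
  have basis: "(pXm1*pXp1)^2 * jacobi_op n a b (T k) =
      pXm1*pXp1 * (smult (B k) (pXp1^4) - smult (C k + B k) (pXm1^2*pXp1^2)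
        + smult (C k) (pXm1^4)) * T k" if "k \<le> n" for k
    unfolding T_def joukowski_basis_def B_def C_def
    by (rule jacobi_op_joukowski_basis) (use that in simp)
  have shift: "pXp1^4 * T (Suc k) = pXm1^2*pXp1^2 * T k"
    "pXm1^4 * T k = pXm1^2*pXp1^2 * T (Suc k)" if "k < n" for k
  proof -
    obtain j where "n - k = Suc j" "n - Suc k = j"
      using \<open>k < n\<close> by (metis Suc_diff_Suc diff_Suc_Suc)
    then show "pXp1^4 * T (Suc k) = pXm1^2*pXp1^2 * T k"
      "pXm1^4 * T k = pXm1^2*pXp1^2 * T (Suc k)"
      unfolding T_def joukowski_basis_def
      by (simp_all add: power_add power_mult mult_ac power2_eq_square numeral_eq_Suc)
  qed
  have "(pXm1*pXp1)^2 * jacobi_op n a b (jacobi_joukowski n a b)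
      = (\<Sum>k\<le>n. smult (A k) ((pXm1*pXp1)^2 * jacobi_op n a b (T k)))"
    unfolding jacobi_joukowski_def jacobi_op_sum A_def T_def
    by (simp add: sum_distrib_left mult_smult_right)
  also have "\<dots> = pXm1*pXp1 * (\<Sum>k\<le>n. smult (A k * B k) (pXp1^4 * T k)
      - smult (A k * B k + A k * C k) (pXm1^2*pXp1^2 * T k) + smult (A k * C k) (pXm1^4 * T k))"
    unfolding sum_distrib_left
    by (intro sum.cong refl, simp only: basis atMost_iff)
      (simp add: algebra_simps smult_add_right smult_diff_right)
  also have "\<dots> = 0"
    by (subst sum_three_term_telescope)
      (simp_all add: A_def B_def C_def shift jacobi_coeff_Suc del: of_nat_Suc)
  finally show ?thesis by (simp add: pXm1_def pXp1_def)
qed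

section \<open>Nonnegativity of the coefficients of \<open>Q\<close>\<close>

lemma coeff_euler_op: "coeff (euler_op n p) j = (real j - real n) * coeff p j"
  by (cases j) (simp_all add: euler_op_def pX_def coeff_pderiv algebra_simps)

lemma coeff_jacobi_op_Suc_Suc:
  "coeff (jacobi_op n a b p) (Suc (Suc j)) =
     ((real j - real n)^2 + (a+b+1)*(real j - real n) - real n * (real n + a + b + 1)) * coeff p j
   + 2*(a-b)*(real j + 1 - real n) * coeff p (Suc j)
   + (- ((real j + 2 - real n)^2) + (a+b+1)*(real j + 2 - real n) + real n * (real n + a + b + 1))
       * coeff p (Suc (Suc j))"
  by (simp add: jacobi_op_def pXm1_times_pXp1 pX_def coeff_euler_op power2_eq_square algebra_simps)

lemma coeff_jacobi_op_1:
  "coeff (jacobi_op n a b p) 1 =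
     (- ((1 - real n)^2) + (a+b+1)*(1 - real n) + real n * (real n + a + b + 1)) * coeff p 1
   - 2*(a-b)*real n * coeff p 0"
  by (simp add: jacobi_op_def pXm1_times_pXp1 pX_def coeff_euler_op power2_eq_square
      algebra_simps numeral_eq_Suc)

lemma jacobi_joukowski_coeff_recurrence:
  fixes n :: nat and a b :: real
  defines "q \<equiv> coeff (jacobi_joukowski n a b)"
  shows "(2*real n - real j) * (real j + a + b + 1) * q j
       = 2*(a-b)*(real j + 1 - real n) * q (Suc j)
         + (real j + 2) * (2*real n + a + b - real j - 1) * q (Suc (Suc j))"
  using coeff_jacobi_op_Suc_Suc[of n a b "jacobi_joukowski n a b" j]
  by (simp add: jacobi_op_jacobi_joukowski q_def power2_eq_square algebra_simps)

lemma jacobi_joukowski_coeff_1: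
  "(2*real n + a + b) * coeff (jacobi_joukowski n a b) 1
     = 2*(a-b)*real n * coeff (jacobi_joukowski n a b) 0"
  using coeff_jacobi_op_1[of n a b "jacobi_joukowski n a b"]
  by (simp add: jacobi_op_jacobi_joukowski power2_eq_square algebra_simps)

lemma gchoose_pos:
  fixes x :: real
  assumes "x > real k - 1"
  shows "(x gchoose k) > 0"
  unfolding gbinomial_altdef_of_nat using assms
  by (intro prod_pos) (auto simp: of_nat_diff)

lemma jacobi_coeff_pos:
  assumes "a > -1" "b > -1" "k \<le> n"
  shows "jacobi_coeff n a b k > 0"
  unfolding jacobi_coeff_def using assms
  by (intro mult_pos_pos gchoose_pos) (simp_all add: of_nat_diff)

lemma degree_joukowski_basis: "k \<le> n \<Longrightarrow> degree (joukowski_basis n k) = 2*n"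
  by (simp add: joukowski_basis_def degree_mult_eq pXm1_def pXp1_def degree_linear_power)

lemma reflect_poly_joukowski_basis: "reflect_poly (joukowski_basis n k) = joukowski_basis n k"
proof -
  have "reflect_poly pXm1 = - pXm1" "reflect_poly pXp1 = pXp1"
    by (simp_all add: pXm1_def pXp1_def reflect_poly_def)
  then show ?thesis
    by (simp add: joukowski_basis_def reflect_poly_mult reflect_poly_power power_mult)
qed

lemma coeff_joukowski_basis_0: "coeff (joukowski_basis n k) 0 = 1"
  by (simp add: joukowski_basis_def pXm1_def pXp1_def flip: poly_0_coeff_0)

lemma coeff_jacobi_joukowski:
  "coeff (jacobi_joukowski n a b) j = (\<Sum>k\<le>n. jacobi_coeff n a b k * coeff (joukowski_basis n k) j)"
  by (simp add: jacobi_joukowski_def coeff_sum)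

lemma coeff_jacobi_joukowski_0:
  "coeff (jacobi_joukowski n a b) 0 = (\<Sum>k\<le>n. jacobi_coeff n a b k)"
  by (simp add: coeff_jacobi_joukowski coeff_joukowski_basis_0)

lemma coeff_jacobi_joukowski_eq_0: "2*n < j \<Longrightarrow> coeff (jacobi_joukowski n a b) j = 0"
  unfolding coeff_jacobi_joukowski
  by (intro sum.neutral ballI) (simp add: coeff_eq_0 degree_joukowski_basis)

lemma coeff_jacobi_joukowski_reflect:
  assumes "j \<le> 2*n"
  shows "coeff (jacobi_joukowski n a b) (2*n - j) = coeff (jacobi_joukowski n a b) j"
  unfolding coeff_jacobi_joukowski
proof (intro sum.cong refl arg_cong2[where f="(*)"])
  fix k assume "k \<in> {..n}"
  then show "coeff (joukowski_basis n k) (2*n - j) = coeff (joukowski_basis n k) j"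
    using coeff_reflect_poly[of "joukowski_basis n k" j] assms
    by (simp add: reflect_poly_joukowski_basis degree_joukowski_basis)
qed

lemma jacobi_joukowski_coeff_0_pos:
  assumes "a > -1" "b > -1"
  shows "coeff (jacobi_joukowski n a b) 0 > 0"
  using assms unfolding coeff_jacobi_joukowski_0 by (intro sum_pos) (simp_all add: jacobi_coeff_pos)

lemma jacobi_joukowski_coeff_nonneg_lower_half:
  assumes "a > -1" "b > -1" "b \<le> a" "a + b \<ge> -1" "n \<ge> 1" "j \<le> n"
  shows "coeff (jacobi_joukowski n a b) j \<ge> 0"
  using \<open>j \<le> n\<close>
proof (induction j rule: induct_nat_012)
  case 0
  show ?case using jacobi_joukowski_coeff_0_pos[OF assms(1,2)] by (rule less_imp_le)
next
  case 1
  have "(2*real n + a + b) * coeff (jacobi_joukowski n a b) 1 \<ge> 0"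
    unfolding jacobi_joukowski_coeff_1
    using assms less_imp_le[OF jacobi_joukowski_coeff_0_pos[OF assms(1,2)]]
    by (intro mult_nonneg_nonneg) simp_all
  moreover have "2*real n + a + b > 0" using assms by simp
  ultimately show ?case by (simp add: zero_le_mult_iff)
next
  case (ge2 i)
  let ?q = "coeff (jacobi_joukowski n a b)"
  have pos: "(real i + 2) * (2*real n + a + b - real i - 1) > 0"
    using assms ge2.prems by (intro mult_pos_pos) simp_all
  have "(real i + 2) * (2*real n + a + b - real i - 1) * ?q (Suc (Suc i))
      = (2*real n - real i) * (real i + a + b + 1) * ?q i
        + 2*(a-b)*(real n - real i - 1) * ?q (Suc i)"
    using jacobi_joukowski_coeff_recurrence[where n=n and a=a and b=b and j=i]
    by (simp add: algebra_simps)
  also have "\<dots> \<ge> 0"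
  proof (rule add_nonneg_nonneg)
    show "(2*real n - real i) * (real i + a + b + 1) * ?q i \<ge> 0"
      using assms ge2 by (intro mult_nonneg_nonneg) simp_all
    show "2*(a-b)*(real n - real i - 1) * ?q (Suc i) \<ge> 0"
      using assms ge2 by (intro mult_nonneg_nonneg) simp_all
  qed
  finally show ?case
    using pos zero_le_mult_iff by (metis not_le)
qed

lemma jacobi_joukowski_coeff_nonneg:
  assumes "a > -1" "b > -1" "b \<le> a" "a + b \<ge> -1" "n \<ge> 1"
  shows "coeff (jacobi_joukowski n a b) j \<ge> 0"
proof -
  consider "j \<le> n" | "n < j" "j \<le> 2*n" | "2*n < j" by linarith
  then show ?thesis
  proof cases
    case 2
    then have "coeff (jacobi_joukowski n a b) j = coeff (jacobi_joukowski n a b) (2*n - j)"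
      by (simp add: coeff_jacobi_joukowski_reflect)
    then show ?thesis
      using 2 jacobi_joukowski_coeff_nonneg_lower_half[OF assms, of "2*n - j"] by simp
  qed (simp_all add: jacobi_joukowski_coeff_nonneg_lower_half[OF assms] coeff_jacobi_joukowski_eq_0)
qed

lemma jacobi_joukowski_coeff_1_pos:
  assumes "a > -1" "b > -1" "b < a" "a + b \<ge> -1" "n \<ge> 1"
  shows "coeff (jacobi_joukowski n a b) 1 > 0"
proof -
  have "(2*real n + a + b) * coeff (jacobi_joukowski n a b) 1 > 0"
    unfolding jacobi_joukowski_coeff_1
    using assms jacobi_joukowski_coeff_0_pos[OF assms(1,2)] by simp
  moreover have "2*real n + a + b > 0" using assms by simp
  ultimately show ?thesis by (simp add: zero_less_mult_iff)
qed

lemma jacobi_joukowski_coeff_2_pos: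
  assumes "a > -1/2" "n \<ge> 1"
  shows "coeff (jacobi_joukowski n a a) 2 > 0"
proof -
  have "2 * (2*real n + 2*a - 1) * coeff (jacobi_joukowski n a a) 2
      = 2*real n * (2*a + 1) * coeff (jacobi_joukowski n a a) 0" (is "?l = ?r")
    using jacobi_joukowski_coeff_recurrence[where n=n and a=a and b=a and j=0]
    by (simp add: algebra_simps numeral_2_eq_2)
  moreover have "?r > 0"
    using assms jacobi_joukowski_coeff_0_pos[where a=a and b=a and n=n] by simp
  moreover have "2 * (2*real n + 2*a - 1) > 0" using assms by simp
  ultimately show ?thesis by (metis zero_less_mult_pos)
qed

section \<open>Polynomials with nonnegative coefficients on circles\<close>

lemma map_poly_of_real_add:
  "map_poly of_real (p + q) = (map_poly of_real p + map_poly of_real q :: 'a::real_algebra_1 poly)"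
  by (rule poly_eqI) (simp add: coeff_map_poly)

lemma map_poly_of_real_mult:
  "map_poly of_real (p * q)
     = (map_poly of_real p * map_poly of_real q :: 'a::{real_algebra_1,comm_ring_1} poly)"
  by (rule poly_eqI) (simp add: coeff_map_poly coeff_mult)

lemma map_poly_of_real_power:
  "map_poly of_real (p ^ k) = (map_poly of_real p ^ k :: 'a::{real_algebra_1,comm_ring_1} poly)"
  by (induction k) (simp_all add: map_poly_of_real_mult)

lemma map_poly_of_real_sum:
  "map_poly of_real (\<Sum>k\<in>S. f k) = (\<Sum>k\<in>S. map_poly of_real (f k) :: 'a::real_algebra_1 poly)"
  by (induction S rule: infinite_finite_induct) (simp_all add: map_poly_of_real_add)

lemma norm_poly_of_real_le:
  fixes p :: "real poly" and u :: "'a::real_normed_field"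
  assumes "\<And>j. coeff p j \<ge> 0"
  shows "norm (poly (map_poly of_real p) u) \<le> poly p (norm u)"
proof -
  have "norm (poly (map_poly of_real p) u) = norm (\<Sum>j\<le>degree p. of_real (coeff p j) * u ^ j)"
    by (simp add: poly_altdef degree_map_poly coeff_map_poly)
  also have "\<dots> \<le> (\<Sum>j\<le>degree p. norm (of_real (coeff p j) * u ^ j))"
    by (rule norm_sum)
  also have "\<dots> = poly p (norm u)"
    using assms by (simp add: poly_altdef norm_mult norm_power)
  finally show ?thesis .
qed

lemma norm_add_eq_if_norm_sum_eq:
  fixes t :: "'i \<Rightarrow> 'a::real_normed_vector"
  assumes "finite S" "i \<in> S" "j \<in> S" "i \<noteq> j"
    and eq: "norm (\<Sum>k\<in>S. t k) = (\<Sum>k\<in>S. norm (t k))"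
  shows "norm (t i + t j) = norm (t i) + norm (t j)"
proof -
  define R where "R = S - {i} - {j}"
  have split: "(\<Sum>k\<in>S. f k) = f i + f j + (\<Sum>k\<in>R. f k)" for f :: "'i \<Rightarrow> 'b::comm_monoid_add"
    using assms(1-4) unfolding R_def
    by (simp add: sum.remove[of S i] sum.remove[of "S - {i}" j] add_ac)
  have "norm (t i) + norm (t j) + (\<Sum>k\<in>R. norm (t k)) = norm (t i + t j + (\<Sum>k\<in>R. t k))"
    using eq unfolding split[of t] split[of "\<lambda>k. norm (t k)"] by simp
  also have "\<dots> \<le> norm (t i + t j) + norm (\<Sum>k\<in>R. t k)"
    by (rule norm_triangle_ineq)
  also have "\<dots> \<le> norm (t i + t j) + (\<Sum>k\<in>R. norm (t k))"
    by (simp add: norm_sum)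
  finally show ?thesis
    using norm_triangle_ineq[of "t i" "t j"] by linarith
qed

lemma power_eq_of_real_if_norm_poly_of_real_eq:
  fixes p :: "real poly" and u :: complex
  assumes nonneg: "\<And>j. coeff p j \<ge> 0" and pos: "coeff p 0 > 0" "coeff p k > 0"
    and eq: "norm (poly (map_poly of_real p) u) = poly p (norm u)"
  shows "u ^ k = of_real (norm u ^ k)"
proof (cases "k = 0")
  case False
  define t where "t j = of_real (coeff p j) * u ^ j" for j
  have "k \<le> degree p" by (rule le_degree) (use pos(2) in simp)
  moreover have "norm (\<Sum>j\<le>degree p. t j) = (\<Sum>j\<le>degree p. norm (t j))"
    using eq nonneg
    by (simp add: t_def poly_altdef degree_map_poly coeff_map_poly norm_mult norm_power)
  ultimately have "norm (t 0 + t k) = norm (t 0) + norm (t k)"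
    using False by (intro norm_add_eq_if_norm_sum_eq) auto
  then have "norm (t 0) *\<^sub>R t k = norm (t k) *\<^sub>R t 0"
    by (simp only: norm_triangle_eq)
  then have "of_real (coeff p 0 * coeff p k) * u ^ k
      = of_real (coeff p 0 * coeff p k) * of_real (norm u ^ k)"
    using nonneg pos by (simp add: t_def norm_mult norm_power scaleR_conv_of_real mult_ac)
  moreover have "of_real (coeff p 0 * coeff p k) \<noteq> (0::complex)" using pos by simp
  ultimately show ?thesis using mult_left_cancel by blast
qed simp

section \<open>Jacobi polynomials on Bernstein ellipses\<close>

lemma poly_jacobi_joukowski:
  fixes u :: "'a::{real_algebra_1,comm_ring_1}"
  shows "poly (map_poly of_real (jacobi_joukowski n a b)) u
     = (\<Sum>k\<le>n. of_real (jacobi_coeff n a b k) * (u - 1) ^ (2*k) * (u + 1) ^ (2*(n-k)))"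
  by (simp add: jacobi_joukowski_def joukowski_basis_def pXm1_def pXp1_def poly_sum
      map_poly_of_real_sum map_poly_smult map_poly_of_real_mult map_poly_of_real_power
      map_poly_pCons algebra_simps)

lemma jacobiP_joukowski:
  fixes u :: complex
  assumes "u \<noteq> 0"
  shows "jacobiP n a b ((u + inverse u) / 2)
       = poly (map_poly of_real (jacobi_joukowski n a b)) u / (4*u) ^ n"
proof -
  have minus: "(u + inverse u)/2 - 1 = (u - 1)^2 / (2*u)"
    and plus: "(u + inverse u)/2 + 1 = (u + 1)^2 / (2*u)"
    using assms by (simp_all add: field_simps power2_eq_square)
  have "((u - 1)^2 / (2*u)) ^ k * ((u + 1)^2 / (2*u)) ^ (n-k)
      = (u - 1) ^ (2*k) * (u + 1) ^ (2*(n-k)) / (2*u) ^ n" (is "?l = ?r") if "k \<le> n" for k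
  proof -
    have "(2*u) ^ k * (2*u) ^ (n-k) = (2*u) ^ n"
      using that by (metis le_add_diff_inverse power_add)
    then show "?l = ?r"
      by (simp only: power_divide times_divide_times_eq power_mult[symmetric])
  qed
  then have "jacobiP n a b ((u + inverse u) / 2)
      = (1 / 2^n) * (\<Sum>k\<le>n. of_real (jacobi_coeff n a b k)
          * ((u - 1) ^ (2*k) * (u + 1) ^ (2*(n-k)) / (2*u) ^ n))"
    unfolding jacobiP_def minus plus jacobi_coeff_def
    by (intro arg_cong[where f="\<lambda>x. (1 / 2^n) * x"] sum.cong) (simp_all add: mult.assoc)
  also have "\<dots> = poly (map_poly of_real (jacobi_joukowski n a b)) u / (4*u) ^ n"
  proof -
    have "(2::complex) ^ n * 2 ^ n = 4 ^ n" by (simp flip: power_mult_distrib)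
    then show ?thesis
      unfolding poly_jacobi_joukowski
      by (simp add: sum_divide_distrib sum_distrib_left mult.assoc[symmetric])
  qed
  finally show ?thesis .
qed

lemma poly_map_poly_of_real_of_real:
  "poly (map_poly of_real p) (of_real x) = (of_real (poly p x) :: 'a::{real_algebra_1,comm_ring_1})"
  by (induction p) (simp_all add: map_poly_pCons)

abbreviation major_vertex :: "real \<Rightarrow> complex" where
  "major_vertex \<rho> \<equiv> complex_of_real ((\<rho> + inverse \<rho>) / 2)"

lemma bernstein_ellipseE:
  assumes "z \<in> bernstein_ellipse \<rho>" "\<rho> \<ge> 0"
  obtains u where "cmod u = \<rho>" "z = (u + inverse u) / 2"
proof -
  from assms(1) obtain u \<theta> where "z = (u + inverse u) / 2" "u = complex_of_real \<rho> * cis \<theta>"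
    unfolding bernstein_ellipse_def by blast
  moreover from this(2) have "cmod u = \<rho>" using assms(2) by (simp add: norm_mult)
  ultimately show ?thesis using that by blast
qed

lemma major_vertex_in_bernstein_ellipse: "major_vertex \<rho> \<in> bernstein_ellipse \<rho>"
  unfolding bernstein_ellipse_def
  by (rule CollectI, rule exI[of _ "complex_of_real \<rho>"]) (auto intro!: exI[of _ 0])

lemma bernstein_ellipse_uminus:
  assumes "z \<in> bernstein_ellipse \<rho>"
  shows "- z \<in> bernstein_ellipse \<rho>"
proof -
  from assms obtain u \<theta> where z: "z = (u + inverse u)/2" and u: "u = complex_of_real \<rho> * cis \<theta>"
    and \<theta>: "0 \<le> \<theta>" "\<theta> < 2*pi"
    unfolding bernstein_ellipse_def by blast
  define \<theta>' where "\<theta>' = (if \<theta> < pi then \<theta> + pi else \<theta> - pi)"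
  have "0 \<le> \<theta>'" "\<theta>' < 2*pi" using \<theta> by (auto simp: \<theta>'_def)
  moreover have "- u = complex_of_real \<rho> * cis \<theta>'"
    using u by (simp add: \<theta>'_def cis.ctr complex_eq_iff)
  moreover have "- z = (- u + inverse (- u))/2" using z by (simp add: field_simps)
  ultimately show ?thesis unfolding bernstein_ellipse_def by blast
qed

lemma jacobiP_uminus: "jacobiP n a b (- z) = (-1)^n * jacobiP n b a z"
proof -
  have "(- z - 1) ^ k * (- z + 1) ^ (n-k) = (-1)^n * ((z + 1) ^ k * (z - 1) ^ (n-k))"
    if "k \<le> n" for k
  proof -
    have "(- z - 1) ^ k = (-1)^k * (z + 1) ^ k" "(- z + 1) ^ (n-k) = (-1)^(n-k) * (z - 1) ^ (n-k)"
      by (simp_all flip: power_mult_distrib)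
    moreover have "(-1::complex)^k * (-1)^(n-k) = (-1)^n"
      using that by (simp flip: power_add)
    ultimately show ?thesis by (metis mult.assoc mult.left_commute)
  qed
  then have "jacobiP n a b (- z) = (1 / 2^n) * (\<Sum>k\<le>n.
      of_real (((real n + a) gchoose (n - k)) * ((real n + b) gchoose k))
      * ((-1)^n * ((z + 1)^k * (z - 1)^(n-k))))"
    unfolding jacobiP_def by (simp add: mult.assoc)
  also have "\<dots> = (1 / 2^n) * (\<Sum>k\<le>n.
      of_real (((real n + b) gchoose (n - k)) * ((real n + a) gchoose k))
      * ((-1)^n * ((z - 1)^k * (z + 1)^(n-k))))"
    by (rule arg_cong[where f="\<lambda>x. (1 / 2^n) * x"],
        rule sum.reindex_bij_witness[where i="\<lambda>k. n - k" and j="\<lambda>k. n - k"]) (auto simp: mult_ac)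
  finally show ?thesis
    unfolding jacobiP_def by (simp add: sum_distrib_left mult_ac)
qed

lemma norm_jacobiP_uminus: "cmod (jacobiP n a b (- z)) = cmod (jacobiP n b a z)"
  by (simp add: jacobiP_uminus norm_mult norm_power)

lemma jacobiP_major_vertex:
  assumes "\<rho> > 0"
  shows "jacobiP n a b (major_vertex \<rho>) = of_real (poly (jacobi_joukowski n a b) \<rho> / (4*\<rho>) ^ n)"
  using jacobiP_joukowski[of "of_real \<rho>" n a b] assms
  by (simp add: poly_map_poly_of_real_of_real)

lemma norm_jacobiP_joukowski:
  assumes "cmod u = \<rho>" "\<rho> > 0"
  shows "cmod (jacobiP n a b ((u + inverse u) / 2))
       = cmod (poly (map_poly of_real (jacobi_joukowski n a b)) u) / (4*\<rho>) ^ n"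
  using assms jacobiP_joukowski[of u n a b] by (auto simp: norm_divide norm_mult norm_power)

context
  fixes \<rho> a b :: real and n :: nat
  assumes \<rho>: "\<rho> > 0" and n: "n \<ge> 1" and ab: "a > -1" "b > -1" "b \<le> a" "a + b \<ge> -1"
begin

lemma norm_jacobiP_major_vertex:
  "cmod (jacobiP n a b (major_vertex \<rho>)) = poly (jacobi_joukowski n a b) \<rho> / (4*\<rho>) ^ n"
proof -
  have "cmod (poly (map_poly of_real (jacobi_joukowski n a b)) (complex_of_real \<rho>))
      \<le> poly (jacobi_joukowski n a b) (cmod (complex_of_real \<rho>))"
    by (rule norm_poly_of_real_le[OF jacobi_joukowski_coeff_nonneg[OF ab n]])
  then have "0 \<le> poly (jacobi_joukowski n a b) (cmod (complex_of_real \<rho>))"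
    by (meson norm_ge_zero order_trans)
  then show ?thesis
    unfolding jacobiP_major_vertex[OF \<rho>] norm_of_real using \<rho> by simp
qed

lemma jacobiP_major_vertex_nonneg:
  "jacobiP n a b (major_vertex \<rho>) = of_real (cmod (jacobiP n a b (major_vertex \<rho>)))"
  by (subst norm_jacobiP_major_vertex) (rule jacobiP_major_vertex[OF \<rho>])

lemma norm_jacobiP_le_major_vertex:
  assumes "z \<in> bernstein_ellipse \<rho>"
  shows "cmod (jacobiP n a b z) \<le> cmod (jacobiP n a b (major_vertex \<rho>))"
proof -
  obtain u where u: "cmod u = \<rho>" "z = (u + inverse u) / 2"
    using bernstein_ellipseE[OF assms] \<rho> by auto
  have "cmod (jacobiP n a b z)
      = cmod (poly (map_poly of_real (jacobi_joukowski n a b)) u) / (4*\<rho>) ^ n"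
    unfolding u(2) by (rule norm_jacobiP_joukowski[OF u(1) \<rho>])
  also have "\<dots> \<le> poly (jacobi_joukowski n a b) \<rho> / (4*\<rho>) ^ n"
    using norm_poly_of_real_le[OF jacobi_joukowski_coeff_nonneg[OF ab n], of u] u(1) \<rho>
    by (simp add: divide_right_mono)
  also have "\<dots> = cmod (jacobiP n a b (major_vertex \<rho>))"
    by (rule norm_jacobiP_major_vertex[symmetric])
  finally show ?thesis .
qed

lemma norm_jacobiP_eq_major_vertexE:
  assumes "z \<in> bernstein_ellipse \<rho>" "cmod (jacobiP n a b z) = cmod (jacobiP n a b (major_vertex \<rho>))"
    and "coeff (jacobi_joukowski n a b) k > 0"
  obtains u where "z = (u + inverse u) / 2" "u ^ k = of_real (\<rho> ^ k)"
proof -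
  obtain u where u: "cmod u = \<rho>" "z = (u + inverse u) / 2"
    using bernstein_ellipseE[OF assms(1)] \<rho> by auto
  have "cmod (poly (map_poly of_real (jacobi_joukowski n a b)) u) / (4*\<rho>) ^ n
      = poly (jacobi_joukowski n a b) \<rho> / (4*\<rho>) ^ n"
    using assms(2) unfolding norm_jacobiP_major_vertex u(2) norm_jacobiP_joukowski[OF u(1) \<rho>] .
  then have "cmod (poly (map_poly of_real (jacobi_joukowski n a b)) u)
      = poly (jacobi_joukowski n a b) (cmod u)"
    using u(1) \<rho> by simp
  then have "u ^ k = of_real (\<rho> ^ k)"
    using power_eq_of_real_if_norm_poly_of_real_eq[OF jacobi_joukowski_coeff_nonneg[OF ab n]
        jacobi_joukowski_coeff_0_pos[OF ab(1,2)] assms(3)] u(1) by simp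
  then show ?thesis using that u(2) by blast
qed

lemma norm_jacobiP_eq_major_vertex_imp_eq:
  assumes "b < a" "z \<in> bernstein_ellipse \<rho>"
    and "cmod (jacobiP n a b z) = cmod (jacobiP n a b (major_vertex \<rho>))"
  shows "z = major_vertex \<rho>"
proof -
  obtain u where "z = (u + inverse u) / 2" "u ^ 1 = of_real (\<rho> ^ 1)"
    using norm_jacobiP_eq_major_vertexE[OF assms(2,3)
        jacobi_joukowski_coeff_1_pos[OF ab(1,2) assms(1) ab(4) n]] .
  then show ?thesis by simp
qed

end

lemma norm_jacobiP_symmetric_eq_major_vertex_imp:
  assumes "\<rho> > 0" "n \<ge> 1" "a > -1/2" "z \<in> bernstein_ellipse \<rho>"
    and "cmod (jacobiP n a a z) = cmod (jacobiP n a a (major_vertex \<rho>))"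
  shows "z = major_vertex \<rho> \<or> z = - major_vertex \<rho>"
proof -
  obtain u where u: "z = (u + inverse u) / 2" "u ^ 2 = of_real (\<rho> ^ 2)"
    using norm_jacobiP_eq_major_vertexE[OF assms(1,2) _ _ _ _ assms(4,5)
        jacobi_joukowski_coeff_2_pos[OF assms(3,2)]] assms(3)
    by auto
  then have "(u - of_real \<rho>) * (u + of_real \<rho>) = 0"
    by (simp add: algebra_simps power2_eq_square)
  then have "u = of_real \<rho> \<or> u = - of_real \<rho>" by (auto simp: add_eq_0_iff)
  then show ?thesis using u(1) by (auto simp: field_simps)
qed

lemma norm_jacobiP_le_minus_major_vertex:
  assumes "\<rho> > 0" "n \<ge> 1" "a > -1" "b > -1" "a \<le> b" "a + b \<ge> -1" "z \<in> bernstein_ellipse \<rho>"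
  shows "cmod (jacobiP n a b z) \<le> cmod (jacobiP n a b (- major_vertex \<rho>))"
  using norm_jacobiP_le_major_vertex[of \<rho> n b a "- z"] norm_jacobiP_uminus[of n a b "- z"]
    assms bernstein_ellipse_uminus by (simp add: norm_jacobiP_uminus add.commute)

lemma norm_jacobiP_eq_minus_major_vertex_imp_eq:
  assumes "\<rho> > 0" "n \<ge> 1" "a > -1" "b > -1" "a < b" "a + b \<ge> -1" "z \<in> bernstein_ellipse \<rho>"
    and "cmod (jacobiP n a b z) = cmod (jacobiP n a b (- major_vertex \<rho>))"
  shows "z = - major_vertex \<rho>"
proof -
  have "cmod (jacobiP n b a (- z)) = cmod (jacobiP n b a (major_vertex \<rho>))"
    using assms(8) norm_jacobiP_uminus[of n a b "- z"] by (simp add: norm_jacobiP_uminus)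
  then have "- z = major_vertex \<rho>"
    using norm_jacobiP_eq_major_vertex_imp_eq[of \<rho> n b a "- z"] assms bernstein_ellipse_uminus
    by (simp add: add.commute)
  then show ?thesis by (metis minus_minus)
qed

theorem mainTheorem4:
  fixes \<rho> \<alpha> \<beta> :: real and n :: nat
  assumes "\<rho> \<ge> 1" and "n \<ge> 1" and "\<alpha> > -1" and "\<beta> > -1"
  defines "E \<equiv> bernstein_ellipse \<rho>"
    and "x0 \<equiv> complex_of_real ((\<rho> + inverse \<rho>) / 2)"
  shows
   "(\<alpha> > \<beta> \<and> \<alpha> + \<beta> \<ge> -1 \<longrightarrow>
       x0 \<in> E
     \<and> (\<forall>z\<in>E. cmod (jacobiP n \<alpha> \<beta> z) \<le> Re (jacobiP n \<alpha> \<beta> x0))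
     \<and> jacobiP n \<alpha> \<beta> x0 = complex_of_real (Re (jacobiP n \<alpha> \<beta> x0))
     \<and> (\<forall>z\<in>E. cmod (jacobiP n \<alpha> \<beta> z) = Re (jacobiP n \<alpha> \<beta> x0) \<longrightarrow> z = x0))
  \<and> (\<alpha> < \<beta> \<and> \<alpha> + \<beta> \<ge> -1 \<longrightarrow>
       - x0 \<in> E
     \<and> (\<forall>z\<in>E. cmod (jacobiP n \<alpha> \<beta> z) \<le> cmod (jacobiP n \<alpha> \<beta> (- x0)))
     \<and> (\<forall>z\<in>E. cmod (jacobiP n \<alpha> \<beta> z) = cmod (jacobiP n \<alpha> \<beta> (- x0)) \<longrightarrow> z = - x0))
  \<and> (\<alpha> = \<beta> \<and> \<alpha> \<ge> -1/2 \<longrightarrow>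
       x0 \<in> E \<and> - x0 \<in> E
     \<and> (\<forall>z\<in>E. cmod (jacobiP n \<alpha> \<beta> z) \<le> cmod (jacobiP n \<alpha> \<beta> x0))
     \<and> cmod (jacobiP n \<alpha> \<beta> (- x0)) = cmod (jacobiP n \<alpha> \<beta> x0))
  \<and> (\<alpha> = \<beta> \<and> \<alpha> > -1/2 \<longrightarrow>
       (\<forall>z\<in>E. cmod (jacobiP n \<alpha> \<beta> z) = cmod (jacobiP n \<alpha> \<beta> x0) \<longrightarrow> z = x0 \<or> z = - x0))"
proof -
  have \<rho>: "\<rho> > 0" using assms(1) by simp
  have x0: "x0 \<in> E" "- x0 \<in> E"
    unfolding E_def x0_def using major_vertex_in_bernstein_ellipse bernstein_ellipse_uminus by blast+
  have real_x0: "jacobiP n \<alpha> \<beta> x0 = of_real (Re (jacobiP n \<alpha> \<beta> x0))"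
    and Re_x0: "Re (jacobiP n \<alpha> \<beta> x0) = cmod (jacobiP n \<alpha> \<beta> x0)" if "\<beta> \<le> \<alpha>" "\<alpha> + \<beta> \<ge> -1"
    using jacobiP_major_vertex_nonneg[OF \<rho> assms(2-4) that] unfolding x0_def
    by (metis Re_complex_of_real)+
  note le = norm_jacobiP_le_major_vertex[OF \<rho> assms(2-4), folded E_def x0_def]
  note le_minus = norm_jacobiP_le_minus_major_vertex[OF \<rho> assms(2-4), folded E_def x0_def]
  note eq = norm_jacobiP_eq_major_vertex_imp_eq[OF \<rho> assms(2-4), folded E_def x0_def]
  note eq_minus = norm_jacobiP_eq_minus_major_vertex_imp_eq[OF \<rho> assms(2-4), folded E_def x0_def]
  note eq_sym = norm_jacobiP_symmetric_eq_major_vertex_imp[OF \<rho> assms(2), folded E_def x0_def]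
  show ?thesis
    using x0 real_x0 Re_x0 le le_minus eq eq_minus eq_sym[of \<beta>] norm_jacobiP_uminus[of n \<alpha> \<alpha> x0]
    by (auto simp del: of_real_divide of_real_add)
qed

end
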